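(* Let $\mathbb X$ and $\mathbb Y$ be Banach spaces, $C\subseteq\mathbb X$ and $F:C\to\mathbb Y$ a continuous function, continuously differentiable on $\mathrm{int}(C)$. Take $x_0\in\mathrm{int}(C)$ with $F'(x_0)$ non-singular. Suppose there exist constants $L>0$ and $b>0$ such that $bL<1/2$, $B(x_0,1/L)\subset C$, \[\|F'(x_0)^{-1}[F'(y)-F'(x)]\|\le L\|x-y\|\quad\text{for all }x,y\in B(x_0,1/L),\] \[\|F'(x_0)^{-1}F(x_0)\|\le b,\qquad 0\le\theta\le\frac{1-\sqrt{2bL}}{1+\sqrt{2bL}}.\] Then the inexact Newton method with starting point $x_0$ and relative residual error tolerance $\theta$: for $k=0,1,\dots$, $x_{k+1}=x_k+S_k$ with $\|F'(x_0)^{-1}[F(x_k)+F'(x_k)S_k]\|\le\theta\|F'(x_0)^{-1}F(x_k)\|$, is well defined; any generated sequence satisfies $\|F'(x_0)^{-1}F(x_k)\|\le(\frac{1+\theta^2}{2})^kb$ for $k=0,1,\dots$, is contained in $B(x_0,\lambda)$, and converges to a point $x_*\in B[x_0,t_*]$ which is the unique zero of $F$ in $B(x_0,1/L)$, where $\lambda:=\sqrt{2bL}/L$ and $t_*:=(1-\sqrt{1-2Lb})/L$. Moreover, for $k=0,1,\dots$, \[\|x_*-x_{k+1}\|\le\Big[\frac{1+\theta}{2}\frac{L}{1-\sqrt{2bL}}\|x_*-x_k\|+\theta\,\frac{1+\sqrt{2bL}}{1-\sqrt{2bL}}\Big]\|x_*-x_k\|,\] and if additionally $0\le\theta<(1-\sqrt{2bL})/(5-\sqrt{2bL})$,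 then \[\|x_*-x_{k+1}\|\le\Big[\frac{1+\theta}{2}+\frac{2\theta}{1-\sqrt{2bL}}\Big]\|x_*-x_k\|,\qquad k=0,1,\dots.\]
   Context: $B(x,r)$, $B[x,r]$ denote open/closed balls of center $x$ and radius $r$. *)

theory Defs
  imports "HOL-Analysis.Analysis"
begin

definition nonsingular :: "('a::real_normed_vector \<Rightarrow>\<^sub>L 'b::real_normed_vector) \<Rightarrow> bool" where
  "nonsingular T \<longleftrightarrow> (\<exists>G. G o\<^sub>L T = id_blinfun \<and> T o\<^sub>L G = id_blinfun)"

definition blinfun_inv :: "('a::real_normed_vector \<Rightarrow>\<^sub>L 'b::real_normed_vector) \<Rightarrow> ('b \<Rightarrow>\<^sub>L 'a)" where
  "blinfun_inv T = (SOME G. G o\<^sub>L T = id_blinfun \<and> T o\<^sub>L G = id_blinfun)"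

end

theory Submission
  imports Defs
begin

text \<open>
  Everything is measured after applying \<open>G = F'(x\<^sub>0)\<^sup>-\<^sup>1\<close>. Along an inexact Newton
  sequence let \<open>U\<^sub>n\<close> be \<open>L\<close> times the length of the polygon \<open>x\<^sub>0 \<dots> x\<^sub>n\<close> and
  \<open>r\<^sub>n = \<parallel>G F(x\<^sub>n)\<parallel>\<close>. The Lipschitz condition gives \<open>(1 - U\<^sub>n) \<parallel>x\<^sub>n\<^sub>+\<^sub>1 - x\<^sub>n\<parallel> \<le> (1 + \<theta>) r\<^sub>n\<close>
  and \<open>r\<^sub>n\<^sub>+\<^sub>1 \<le> \<theta> r\<^sub>n + L/2 \<parallel>x\<^sub>n\<^sub>+\<^sub>1 - x\<^sub>n\<parallel>\<^sup>2\<close>. For \<open>a = \<surd>(2bL)\<close> and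
  \<open>\<theta> \<le> (1 - a)/(1 + a)\<close> these two inequalities propagate the majorant invariant
  \<open>U\<^sub>n < a\<close>, \<open>2 L r\<^sub>n \<le> (a - U\<^sub>n)\<^sup>2\<close> and force \<open>r\<^sub>n\<^sub>+\<^sub>1 \<le> (1 + \<theta>\<^sup>2)/2 \<cdot> r\<^sub>n\<close>.
  Hence the polygon has length below \<open>a/L\<close>, the sequence is Cauchy, and its limit
  is a zero. Every zero \<open>y\<close> in \<open>B(x\<^sub>0, 1/L)\<close> satisfies
  \<open>s \<le> L b + s\<^sup>2/2\<close> for \<open>s = L \<parallel>y - x\<^sub>0\<parallel> < 1\<close>, so it lies in \<open>B[x\<^sub>0, t\<^sub>*]\<close>, where
  \<open>z \<mapsto> z - G F(z)\<close> is a contraction; this gives uniqueness. The error estimates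
  come from the same first-order expansion, now taken between \<open>x\<^sub>k\<close> and the zero.
\<close>

section \<open>Scalar inequalities of the majorant argument\<close>

lemma majorant_step_length:
  fixes a \<theta> U v \<delta> :: real
  assumes U0: "0 \<le> U" and Ua: "U < a" and a1: "a < 1" and th0: "0 \<le> \<theta>"
    and tha: "(1 + \<theta>) * a \<le> 1 - \<theta>" and v0: "0 \<le> v" and vU: "2 * v \<le> (a - U)\<^sup>2"
    and dU: "(1 - U) * \<delta> \<le> (1 + \<theta>) * v"
  shows "\<delta> \<le> (1 + \<theta>) * a * (a - U) / 2" and "(a - U) * \<delta> \<le> a * (1 + \<theta>) * v"
    and "U + \<delta> < a"
proof -
  define m where "m = 1 - U"
  define w where "w = a - U"
  have m0: "m > 0" and w0: "w > 0" using Ua a1 by (simp_all add: m_def w_def)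
  have "U * a \<le> U" using a1 U0 by (simp add: mult_left_le)
  then have wam: "w \<le> a * m" unfolding w_def m_def by (simp add: algebra_simps)
  have "m * \<delta> \<le> (1 + \<theta>) * v" using dU unfolding m_def .
  also have "\<dots> \<le> (1 + \<theta>) * (w * w / 2)"
    using vU th0 unfolding w_def power2_eq_square by (intro mult_left_mono) auto
  also have "\<dots> \<le> (1 + \<theta>) * (w * (a * m) / 2)"
    using wam w0 th0 by (intro mult_left_mono divide_right_mono) auto
  finally have "m * \<delta> \<le> m * ((1 + \<theta>) * a * w / 2)" by (simp add: algebra_simps)
  then show d1: "\<delta> \<le> (1 + \<theta>) * a * (a - U) / 2" using m0 unfolding w_def by simp
  have "m * (w * \<delta>) \<le> w * ((1 + \<theta>) * v)"
    using dU w0 unfolding m_def by (metis mult.left_commute mult_le_cancel_left_pos)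
  also have "\<dots> \<le> (a * m) * ((1 + \<theta>) * v)" using wam th0 v0 by (intro mult_right_mono) auto
  finally have "m * (w * \<delta>) \<le> m * (a * (1 + \<theta>) * v)" by (simp add: algebra_simps)
  then show "(a - U) * \<delta> \<le> a * (1 + \<theta>) * v" using m0 unfolding w_def by simp
  have "(1 + \<theta>) * a * w \<le> 1 * w" using tha th0 w0 by (intro mult_right_mono) auto
  then show "U + \<delta> < a" using d1[folded w_def] w0 w_def by linarith
qed

lemma majorant_step_residual:
  fixes a \<theta> U v \<delta> v' :: real
  assumes U0: "0 \<le> U" and Ua: "U < a" and a1: "a < 1" and th0: "0 \<le> \<theta>"
    and tha: "(1 + \<theta>) * a \<le> 1 - \<theta>" and v0: "0 \<le> v" and vU: "2 * v \<le> (a - U)\<^sup>2"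
    and d0: "0 \<le> \<delta>" and dU: "(1 - U) * \<delta> \<le> (1 + \<theta>) * v"
    and v': "v' \<le> \<theta> * v + \<delta>\<^sup>2 / 2"
  shows "2 * v' \<le> (a - (U + \<delta>))\<^sup>2" and "v' \<le> (1 + \<theta>\<^sup>2) / 2 * v"
proof -
  note length = majorant_step_length[OF U0 Ua a1 th0 tha v0 vU dU]
  have a0: "a > 0" using U0 Ua by simp
  have "2 * \<theta> * v + 2 * ((a - U) * \<delta>) \<le> 2 * v * (\<theta> + (1 + \<theta>) * a)"
    using length(2) by (simp add: algebra_simps)
  also have "\<dots> \<le> 2 * v" using tha v0 by (simp add: mult_left_le)
  also have "\<dots> \<le> (a - U)\<^sup>2" by (rule vU)
  finally show "2 * v' \<le> (a - (U + \<delta>))\<^sup>2"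
    using v' by (simp add: power2_eq_square algebra_simps)
  have "\<delta> * \<delta> \<le> (1 + \<theta>) * a / 2 * ((a - U) * \<delta>)"
    using mult_right_mono[OF length(1) d0] by (simp add: algebra_simps)
  also have "\<dots> \<le> (1 + \<theta>) * a / 2 * (a * (1 + \<theta>) * v)"
    using length(2) th0 a0 by (intro mult_left_mono) auto
  also have "\<dots> = ((1 + \<theta>) * a)\<^sup>2 * v / 2" by (simp add: power2_eq_square algebra_simps)
  also have "\<dots> \<le> (1 - \<theta>)\<^sup>2 * v / 2"
    using tha th0 a0 v0 by (intro divide_right_mono mult_right_mono power_mono) auto
  finally have "v' \<le> \<theta> * v + (1 - \<theta>)\<^sup>2 * v / 4" using v' by (simp add: power2_eq_square)
  also have "\<dots> = (1 + \<theta>\<^sup>2) / 2 * v - (1 - \<theta>)\<^sup>2 * v / 4"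
    by (simp add: power2_eq_square field_simps)
  finally show "v' \<le> (1 + \<theta>\<^sup>2) / 2 * v" using v0 by (smt (verit) divide_nonneg_nonneg mult_nonneg_nonneg zero_le_power2)
qed

text \<open>The second bound needs no smallness of \<open>\<theta>\<close>; the paper's restriction
  \<open>\<theta> < (1 - a)/(5 - a)\<close> only makes its factor smaller than one.\<close>

lemma error_recursion_bounds:
  fixes L a U u e e' \<theta> r :: real
  assumes L: "0 < L" and Ua: "U < a" and a1: "a < 1" and u0: "0 \<le> u" and uU: "u \<le> U"
    and e0: "0 \<le> e" and eU: "L * e \<le> a - U" and th0: "0 \<le> \<theta>" and re: "r \<le> (1 + a) * e"
    and e'0: "0 \<le> e'" and key: "(1 - u) * e' \<le> L / 2 * e\<^sup>2 + \<theta> * r"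
  shows "e' \<le> ((1 + \<theta>) / 2 * (L / (1 - a)) * e + \<theta> * (1 + a) / (1 - a)) * e"
    and "e' \<le> ((1 + \<theta>) / 2 + 2 * \<theta> / (1 - a)) * e"
proof -
  have ma: "0 < 1 - a" using a1 by simp
  have mu: "1 - a \<le> 1 - u" using uU Ua by simp
  have key': "(1 - u) * e' \<le> L / 2 * e\<^sup>2 + \<theta> * ((1 + a) * e)"
    using key mult_left_mono[OF re th0] by linarith
  have "L / 2 * e\<^sup>2 \<le> (1 + \<theta>) / 2 * L * e\<^sup>2"
    using th0 L by (intro mult_right_mono) auto
  moreover have "(1 - a) * e' \<le> (1 - u) * e'" using mu e'0 by (rule mult_right_mono)
  ultimately have "(1 - a) * e' \<le> (1 + \<theta>) / 2 * L * e\<^sup>2 + \<theta> * ((1 + a) * e)"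
    using key' by linarith
  then have "e' \<le> ((1 + \<theta>) / 2 * L * e\<^sup>2 + \<theta> * ((1 + a) * e)) / (1 - a)"
    using ma by (simp add: field_simps)
  also have "\<dots> = ((1 + \<theta>) / 2 * (L / (1 - a)) * e + \<theta> * (1 + a) / (1 - a)) * e"
    using ma by (simp add: power2_eq_square add_divide_distrib algebra_simps)
  finally show "e' \<le> ((1 + \<theta>) / 2 * (L / (1 - a)) * e + \<theta> * (1 + a) / (1 - a)) * e" .
  have "L * e \<le> 1 - u" using eU uU a1 by linarith
  from mult_right_mono[OF this e0] have "L / 2 * e\<^sup>2 \<le> (1 - u) * e / 2"
    by (simp add: power2_eq_square)
  moreover have "\<theta> * ((1 + a) * e) \<le> \<theta> * (2 * e)"
    using a1 e0 th0 by (intro mult_left_mono mult_right_mono) auto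
  moreover have "\<theta> * (2 * e) \<le> (1 - u) * (2 * \<theta> / (1 - a) * e)"
  proof -
    have "\<theta> * (2 * e) = (1 - a) * (2 * \<theta> / (1 - a) * e)" using ma by simp
    also have "\<dots> \<le> (1 - u) * (2 * \<theta> / (1 - a) * e)"
      using mu th0 e0 ma by (intro mult_right_mono) auto
    finally show ?thesis .
  qed
  ultimately have "(1 - u) * e' \<le> (1 - u) * e / 2 + (1 - u) * (2 * \<theta> / (1 - a) * e)"
    using key' by linarith
  then have "(1 - u) * e' \<le> (1 - u) * (e / 2 + 2 * \<theta> / (1 - a) * e)"
    by (simp only: distrib_left times_divide_eq_right)
  then have "e' \<le> e / 2 + 2 * \<theta> / (1 - a) * e" using ma mu by simp
  also have "\<dots> \<le> ((1 + \<theta>) / 2 + 2 * \<theta> / (1 - a)) * e" using th0 e0 by (simp add: algebra_simps)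
  finally show "e' \<le> ((1 + \<theta>) / 2 + 2 * \<theta> / (1 - a)) * e" .
qed

lemma le_one_minus_sqrt_if_le_quadratic:
  fixes s c :: real
  assumes "s \<le> c + s\<^sup>2 / 2" and "s < 1"
  shows "s \<le> 1 - sqrt (1 - 2 * c)"
proof -
  have "1 - 2 * c \<le> (1 - s)\<^sup>2" using assms(1) by (simp add: power2_eq_square algebra_simps)
  then have "sqrt (1 - 2 * c) \<le> 1 - s" using real_sqrt_le_mono assms(2) by fastforce
  then show ?thesis by simp
qed

section \<open>Polygonal length of a sequence\<close>

definition path_length :: "(nat \<Rightarrow> 'a::real_normed_vector) \<Rightarrow> nat \<Rightarrow> real" where
  "path_length x n = (\<Sum>j<n. norm (x (Suc j) - x j))"

lemma path_length_0 [simp]: "path_length x 0 = 0"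
  by (simp add: path_length_def)

lemma path_length_nonneg: "0 \<le> path_length x n"
  by (simp add: path_length_def sum_nonneg)

lemma path_length_Suc: "path_length x (Suc n) = path_length x n + norm (x (Suc n) - x n)"
  by (simp add: path_length_def)

lemma norm_diff_le_path_length_diff:
  assumes "m \<le> n"
  shows "norm (x n - x m) \<le> path_length x n - path_length x m"
proof -
  have "norm (x n - x m) = norm (\<Sum>j=m..<n. x (Suc j) - x j)"
    using sum_Suc_diff'[OF assms, of x] by simp
  also have "\<dots> \<le> (\<Sum>j=m..<n. norm (x (Suc j) - x j))" by (rule norm_sum)
  also have "\<dots> = path_length x n - path_length x m"
    using sum.atLeastLessThan_concat[OF _ assms, of 0 "\<lambda>j. norm (x (Suc j) - x j)"]
    by (simp add: path_length_def atLeast0LessThan)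
  finally show ?thesis .
qed

lemma norm_diff_le_path_length: "norm (x n - x 0) \<le> path_length x n"
  using norm_diff_le_path_length_diff[of 0 n x] by simp

lemma convergent_if_path_length_bounded:
  fixes x :: "nat \<Rightarrow> 'a::banach"
  assumes "\<And>n. path_length x n \<le> B"
  shows "convergent x"
proof -
  have "summable (\<lambda>j. norm (x (Suc j) - x j))"
  proof (rule bounded_imp_summable)
    show "(\<Sum>j\<le>n. norm (x (Suc j) - x j)) \<le> B" for n
      using assms[of "Suc n"] unfolding path_length_def lessThan_Suc_atMost .
  qed simp
  then have "(\<lambda>n. \<Sum>j<n. x (Suc j) - x j) \<longlonglongrightarrow> (\<Sum>j. x (Suc j) - x j)"
    by (rule summable_LIMSEQ[OF summable_norm_cancel])
  then have "(\<lambda>n. (x n - x 0) + x 0) \<longlonglongrightarrow> (\<Sum>j. x (Suc j) - x j) + x 0"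
    by (intro tendsto_add tendsto_const) (simp add: sum_lessThan_telescope)
  then show ?thesis by (auto simp: convergent_def)
qed

section \<open>The affine invariant Lipschitz condition\<close>

locale affine_invariant_lipschitz =
  fixes F :: "'a::banach \<Rightarrow> 'b::banach" and F' :: "'a \<Rightarrow> ('a \<Rightarrow>\<^sub>L 'b)"
    and G :: "'b \<Rightarrow>\<^sub>L 'a" and x0 :: 'a and L :: real
  assumes L_pos: "0 < L"
    and derivative: "\<And>x. x \<in> ball x0 (1/L) \<Longrightarrow> (F has_derivative blinfun_apply (F' x)) (at x)"
    and lipschitz: "\<And>x y. x \<in> ball x0 (1/L) \<Longrightarrow> y \<in> ball x0 (1/L) \<Longrightarrow>
      norm (G o\<^sub>L (F' y - F' x)) \<le> L * norm (x - y)"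
    and left_inverse: "G o\<^sub>L F' x0 = id_blinfun"
    and right_inverse: "F' x0 o\<^sub>L G = id_blinfun"
begin

lemma G_F'_x0 [simp]: "G (F' x0 v) = v"
  using arg_cong[OF left_inverse, of "\<lambda>T. blinfun_apply T v"] by simp

lemma G_eq_0_iff [simp]: "G w = 0 \<longleftrightarrow> w = 0"
  using arg_cong[OF right_inverse, of "\<lambda>T. blinfun_apply T w"] by (auto simp: blinfun.zero_right)

lemma x0_in_ball [simp]: "x0 \<in> ball x0 (1/L)"
  using L_pos by simp

lemma mem_ball_scaled_iff: "w \<in> ball x0 (r / L) \<longleftrightarrow> L * norm (w - x0) < r"
  using L_pos by (simp add: dist_norm norm_minus_commute field_simps)

lemma mem_cball_scaled_iff: "w \<in> cball x0 (r / L) \<longleftrightarrow> L * norm (w - x0) \<le> r"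
  using L_pos by (simp add: dist_norm norm_minus_commute field_simps)

lemma cball_scaled_subset_ball: "a < 1 \<Longrightarrow> cball x0 (a / L) \<subseteq> ball x0 (1/L)"
  using L_pos divide_strict_right_mono[of a 1 L] by (auto simp: cball_subset_ball_iff)

lemma has_derivative_G_F:
  "x \<in> ball x0 (1/L) \<Longrightarrow> ((\<lambda>z. G (F z)) has_derivative (\<lambda>v. G (F' x v))) (at x)"
  using bounded_linear.has_derivative[OF blinfun.bounded_linear_right derivative] by blast

lemma G_F'_diff: "(G o\<^sub>L (F' y - F' x)) v = G (F' y v) - G (F' x v)"
  by (simp add: blinfun.diff_left blinfun.diff_right)

lemma norm_G_F'_ge:
  assumes "x \<in> ball x0 (1/L)"
  shows "(1 - L * norm (x - x0)) * norm v \<le> norm (G (F' x v))"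
proof -
  let ?E = "G o\<^sub>L (F' x0 - F' x)"
  have "norm (?E v) \<le> L * norm (x - x0) * norm v"
    using norm_blinfun[of ?E v] mult_right_mono[OF lipschitz[OF assms x0_in_ball] norm_ge_zero[of v]]
    by linarith
  moreover have "norm v - norm (?E v) \<le> norm (G (F' x v))"
    using norm_triangle_ineq2[of v "?E v"] by (simp add: blinfun.diff_left blinfun.diff_right)
  ultimately show ?thesis by (simp add: algebra_simps)
qed

text \<open>Near \<open>x\<^sub>0\<close>, \<open>G F'(x)\<close> is a small perturbation of the identity; a preimage of \<open>w\<close>
  is the fixed point of the contraction \<open>v \<mapsto> w + G (F'(x\<^sub>0) - F'(x)) v\<close>.\<close>

lemma G_F'_surj:
  assumes x: "x \<in> ball x0 (1/L)"
  shows "\<exists>v. G (F' x v) = w"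
proof -
  let ?E = "G o\<^sub>L (F' x0 - F' x)"
  define c where "c = L * norm (x - x0)"
  have c: "0 \<le> c" "c < 1"
    using x L_pos by (auto simp: c_def dist_norm norm_minus_commute field_simps)
  have "norm ?E \<le> c" using lipschitz[OF x x0_in_ball] by (simp add: c_def)
  then have "\<exists>!v. w + ?E v = v"
  proof (intro banach_fix_type[OF c] allI)
    fix u v
    have "dist (w + ?E u) (w + ?E v) = norm (?E (u - v))"
      by (simp add: dist_norm blinfun.diff_right)
    also have "\<dots> \<le> norm ?E * norm (u - v)" by (rule norm_blinfun)
    also have "\<dots> \<le> c * dist u v" by (simp add: dist_norm mult_right_mono \<open>norm ?E \<le> c\<close>)
    finally show "dist (w + ?E u) (w + ?E v) \<le> c * dist u v" .
  qed
  then obtain v where "w + ?E v = v" by blast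
  then have "G (F' x v) = w" by (simp add: blinfun.diff_left blinfun.diff_right algebra_simps)
  then show ?thesis ..
qed

lemma norm_taylor_remainder_le:
  assumes x: "x \<in> ball x0 (1/L)" and y: "y \<in> ball x0 (1/L)"
  shows "norm (G (F y) - G (F x) - G (F' x (y - x))) \<le> L / 2 * (norm (y - x))\<^sup>2"
proof -
  let ?p = "\<lambda>t. x + t *\<^sub>R (y - x)"
  define f where "f = (\<lambda>t::real. G (F (?p t)) - t *\<^sub>R G (F' x (y - x)))"
  define f' where "f' = (\<lambda>t::real. G (F' (?p t) (y - x)) - G (F' x (y - x)))"
  define \<phi> where "\<phi> = (\<lambda>t::real. L / 2 * t\<^sup>2 * (norm (y - x))\<^sup>2)"
  have p_in: "?p t \<in> ball x0 (1/L)" if "t \<in> {0..1}" for t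
    using convexD[OF convex_ball x y, of "1 - t" t] that by (simp add: algebra_simps)
  have f': "(f has_vector_derivative f' t) (at t)" if "t \<in> {0..1}" for t
  proof -
    have "(?p has_derivative (\<lambda>v. v *\<^sub>R (y - x))) (at t)"
      by (auto intro!: derivative_eq_intros)
    from has_derivative_compose[OF this has_derivative_G_F[OF p_in[OF that]]]
    have "((\<lambda>t. G (F (?p t))) has_vector_derivative G (F' (?p t) (y - x))) (at t)"
      by (simp add: has_vector_derivative_def blinfun.scaleR_right)
    then show ?thesis unfolding f_def f'_def by (auto intro!: derivative_eq_intros)
  qed
  have "norm (f' t) \<le> L * t * (norm (y - x))\<^sup>2" if "0 < t" "t < 1" for t
  proof -
    have "norm (f' t) \<le> norm (G o\<^sub>L (F' (?p t) - F' x)) * norm (y - x)"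
      unfolding f'_def G_F'_diff[symmetric] by (rule norm_blinfun)
    also have "\<dots> \<le> L * norm (x - ?p t) * norm (y - x)"
      using that by (intro mult_right_mono lipschitz x p_in) auto
    finally show ?thesis using that by (simp add: power2_eq_square mult.assoc)
  qed
  moreover have "(\<phi> has_vector_derivative (L * t * (norm (y - x))\<^sup>2)) (at t)" for t
    unfolding \<phi>_def has_vector_derivative_def
    by (auto intro!: derivative_eq_intros simp: algebra_simps)
  moreover have "continuous_on {0..1} f"
    using f' by (meson continuous_at_imp_continuous_on has_vector_derivative_continuous)
  moreover have "continuous_on {0..1} \<phi>" unfolding \<phi>_def by (intro continuous_intros)
  ultimately have "norm (f 1 - f 0) \<le> \<phi> 1 - \<phi> 0"
    using f' by (intro differentiable_bound_general[OF zero_less_one]) auto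
  then show ?thesis unfolding f_def \<phi>_def by (simp add: algebra_simps)
qed

lemma norm_G_F_minus_id_diff_le:
  assumes S: "convex S" "S \<subseteq> ball x0 (1/L)" and B: "\<And>z. z \<in> S \<Longrightarrow> L * norm (z - x0) \<le> B"
    and x: "x \<in> S" and y: "y \<in> S"
  shows "norm ((G (F x) - x) - (G (F y) - y)) \<le> B * norm (x - y)"
proof (rule differentiable_bound[OF S(1) _ _ x y])
  fix z assume z: "z \<in> S"
  then have "((\<lambda>z. G (F z) - z) has_derivative (\<lambda>v. G (F' z v) - v)) (at z)"
    using S(2) by (auto intro!: has_derivative_diff has_derivative_G_F has_derivative_ident)
  moreover have "(\<lambda>v. G (F' z v) - v) = blinfun_apply (G o\<^sub>L (F' z - F' x0))"
    by (simp add: fun_eq_iff blinfun.diff_left blinfun.diff_right)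
  ultimately show "((\<lambda>z. G (F z) - z) has_derivative blinfun_apply (G o\<^sub>L (F' z - F' x0))) (at z within S)"
    by (metis has_derivative_at_withinI)
  have "norm (G o\<^sub>L (F' z - F' x0)) \<le> L * norm (x0 - z)"
    using lipschitz[OF x0_in_ball, of z] z S(2) by auto
  then show "onorm (blinfun_apply (G o\<^sub>L (F' z - F' x0))) \<le> B"
    using B[OF z] by (simp add: norm_blinfun.rep_eq[symmetric] norm_minus_commute)
qed

lemma iterate_mem_ball:
  assumes "x 0 = x0" and "L * path_length x n < r"
  shows "x n \<in> ball x0 (r / L)"
  using mult_left_mono[OF norm_diff_le_path_length[of x n] less_imp_le[OF L_pos]] assms
  unfolding mem_ball_scaled_iff by simp

lemma inexact_step_length_le:
  assumes y: "y \<in> ball x0 (1/L)"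
    and step: "norm (G (F y + F' y (z - y))) \<le> \<theta> * norm (G (F y))"
  shows "(1 - L * norm (y - x0)) * norm (z - y) \<le> (1 + \<theta>) * norm (G (F y))"
proof -
  have "(1 - L * norm (y - x0)) * norm (z - y) \<le> norm (G (F' y (z - y)))"
    by (rule norm_G_F'_ge[OF y])
  also have "\<dots> \<le> norm (G (F y + F' y (z - y))) + norm (G (F y))"
    using norm_triangle_ineq4[of "G (F y + F' y (z - y))" "G (F y)"]
    by (simp add: blinfun.add_right)
  finally show ?thesis using step by (simp add: algebra_simps)
qed

lemma inexact_step_residual_le:
  assumes y: "y \<in> ball x0 (1/L)" and z: "z \<in> ball x0 (1/L)"
    and step: "norm (G (F y + F' y (z - y))) \<le> \<theta> * norm (G (F y))"
  shows "norm (G (F z)) \<le> \<theta> * norm (G (F y)) + L / 2 * (norm (z - y))\<^sup>2"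
proof -
  have "G (F z) = (G (F z) - G (F y) - G (F' y (z - y))) + G (F y + F' y (z - y))"
    by (simp add: blinfun.add_right)
  then have "norm (G (F z)) \<le> norm (G (F z) - G (F y) - G (F' y (z - y))) + norm (G (F y + F' y (z - y)))"
    by (metis norm_triangle_ineq)
  then show ?thesis using norm_taylor_remainder_le[OF y z] step by linarith
qed

lemma inexact_step_error_le:
  assumes y: "y \<in> ball x0 (1/L)" and xs: "xs \<in> ball x0 (1/L)" and zero: "F xs = 0"
    and step: "norm (G (F y + F' y (z - y))) \<le> \<theta> * norm (G (F y))"
  shows "(1 - L * norm (y - x0)) * norm (xs - z) \<le> L / 2 * (norm (xs - y))\<^sup>2 + \<theta> * norm (G (F y))"
proof -
  let ?R = "G (F xs) - G (F y) - G (F' y (xs - y))"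
  have "G (F' y (z - xs)) = G (F y + F' y (z - y)) + ?R"
    using zero by (simp add: blinfun.diff_right blinfun.add_right)
  then have "norm (G (F' y (z - xs))) \<le> norm (G (F y + F' y (z - y))) + norm ?R"
    by (metis norm_triangle_ineq)
  moreover have "(1 - L * norm (y - x0)) * norm (xs - z) \<le> norm (G (F' y (z - xs)))"
    using norm_G_F'_ge[OF y, of "z - xs"] by (simp add: norm_minus_commute)
  ultimately show ?thesis using norm_taylor_remainder_le[OF y xs] step by linarith
qed

lemma residual_le_error:
  assumes a: "a < 1" and y: "y \<in> cball x0 (a / L)" and xs: "xs \<in> cball x0 (a / L)"
    and zero: "F xs = 0"
  shows "norm (G (F y)) \<le> (1 + a) * norm (xs - y)"
proof -
  have "norm ((G (F y) - y) - (G (F xs) - xs)) \<le> a * norm (y - xs)"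
    using cball_scaled_subset_ball[OF a] L_pos y xs
    by (intro norm_G_F_minus_id_diff_le) (auto simp: dist_norm norm_minus_commute field_simps)
  then have "norm (G (F y) - (y - xs)) \<le> a * norm (xs - y)"
    using zero by (simp add: norm_minus_commute algebra_simps)
  then show ?thesis
    using norm_triangle_ineq[of "G (F y) - (y - xs)" "y - xs"]
    by (simp add: norm_minus_commute algebra_simps)
qed

end

section \<open>Convergence of the inexact Newton iteration\<close>

locale inexact_newton_kantorovich = affine_invariant_lipschitz +
  fixes a b \<theta> :: real
  assumes a_pos: "0 < a" and a_lt_1: "a < 1" and a_sq: "a\<^sup>2 = 2 * b * L"
    and theta_nonneg: "0 \<le> \<theta>" and theta_le: "(1 + \<theta>) * a \<le> 1 - \<theta>"
    and residual_x0: "norm (G (F x0)) \<le> b"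
begin

lemma theta_lt_1: "\<theta> < 1"
  using theta_le mult_pos_pos[of "1 + \<theta>" a] a_pos theta_nonneg by linarith

lemma two_L_b_lt_1: "2 * L * b < 1"
  using power_strict_mono[OF a_lt_1, of 2] a_pos a_sq by (simp add: mult.commute mult.left_commute)

lemma zero_dist_le:
  assumes y: "y \<in> ball x0 (1/L)" and zero: "F y = 0"
  shows "L * norm (y - x0) \<le> 1 - sqrt (1 - 2 * L * b)"
proof -
  have "norm (- G (F x0) - (y - x0)) \<le> L / 2 * (norm (y - x0))\<^sup>2"
    using norm_taylor_remainder_le[OF x0_in_ball y] zero by simp
  then have "norm (y - x0) \<le> b + L / 2 * (norm (y - x0))\<^sup>2"
    using norm_triangle_ineq[of "G (F x0)" "- G (F x0) - (y - x0)"] residual_x0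
    by (simp add: norm_minus_commute)
  then have "L * norm (y - x0) \<le> L * b + (L * norm (y - x0))\<^sup>2 / 2"
    using mult_left_mono[OF _ less_imp_le[OF L_pos]]
    by (fastforce simp: power2_eq_square algebra_simps)
  moreover have "L * norm (y - x0) < 1" using y mem_ball_scaled_iff[of y 1] by simp
  ultimately have "L * norm (y - x0) \<le> 1 - sqrt (1 - 2 * (L * b))"
    by (rule le_one_minus_sqrt_if_le_quadratic)
  then show ?thesis by (simp add: mult.assoc)
qed

lemma zero_unique:
  assumes y: "y \<in> ball x0 (1/L)" "F y = 0" and z: "z \<in> ball x0 (1/L)" "F z = 0"
  shows "y = z"
proof -
  define c where "c = 1 - sqrt (1 - 2 * L * b)"
  have c: "c < 1" using two_L_b_lt_1 by (simp add: c_def)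
  have "norm ((G (F y) - y) - (G (F z) - z)) \<le> c * norm (y - z)"
  proof (rule norm_G_F_minus_id_diff_le[of "cball x0 (c / L)"])
    show "cball x0 (c / L) \<subseteq> ball x0 (1/L)" using cball_scaled_subset_ball[OF c] .
    show "y \<in> cball x0 (c / L)" "z \<in> cball x0 (c / L)"
      unfolding mem_cball_scaled_iff c_def using zero_dist_le y z by blast+
  qed (simp_all only: mem_cball_scaled_iff convex_cball)
  then have "(1 - c) * norm (y - z) \<le> 0" using y z by (simp add: norm_minus_commute algebra_simps)
  then show ?thesis using c by (simp add: mult_le_0_iff)
qed

lemma inexact_step_invariant:
  assumes y: "L * norm (y - x0) \<le> U" and U: "0 \<le> U" "U < a"
    and r: "2 * L * norm (G (F y)) \<le> (a - U)\<^sup>2"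
    and step: "norm (G (F y + F' y (z - y))) \<le> \<theta> * norm (G (F y))"
  shows "U + L * norm (z - y) < a"
    and "2 * L * norm (G (F z)) \<le> (a - (U + L * norm (z - y)))\<^sup>2"
    and "norm (G (F z)) \<le> (1 + \<theta>\<^sup>2) / 2 * norm (G (F y))"
proof -
  have y_ball: "y \<in> ball x0 (1/L)" using y U a_lt_1 mem_ball_scaled_iff[of y 1] by simp
  have r': "2 * (L * norm (G (F y))) \<le> (a - U)\<^sup>2" using r by (simp add: mult.assoc)
  have "(1 - U) * norm (z - y) \<le> (1 - L * norm (y - x0)) * norm (z - y)"
    using y by (intro mult_right_mono) auto
  also have "\<dots> \<le> (1 + \<theta>) * norm (G (F y))" by (rule inexact_step_length_le[OF y_ball step])
  finally have len: "(1 - U) * (L * norm (z - y)) \<le> (1 + \<theta>) * (L * norm (G (F y)))"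
    using mult_left_mono[OF _ less_imp_le[OF L_pos]] by (fastforce simp: algebra_simps)
  have v0: "0 \<le> L * norm (G (F y))" and d0: "0 \<le> L * norm (z - y)" using L_pos by simp_all
  note length = majorant_step_length[OF U a_lt_1 theta_nonneg theta_le v0 r' len]
  show "U + L * norm (z - y) < a" by (rule length(3))
  have "norm (z - x0) \<le> norm (z - y) + norm (y - x0)"
    using norm_triangle_ineq[of "z - y" "y - x0"] by simp
  then have "L * norm (z - x0) \<le> L * norm (z - y) + L * norm (y - x0)"
    using mult_left_mono[OF _ less_imp_le[OF L_pos]] by (fastforce simp: distrib_left)
  then have "L * norm (z - x0) < 1" using y length(3) a_lt_1 by linarith
  then have z_ball: "z \<in> ball x0 (1/L)" using mem_ball_scaled_iff[of z 1] by simp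
  have "L * norm (G (F z)) \<le> L * (\<theta> * norm (G (F y)) + L / 2 * (norm (z - y))\<^sup>2)"
    using inexact_step_residual_le[OF y_ball z_ball step] L_pos by simp
  then have "L * norm (G (F z)) \<le> \<theta> * (L * norm (G (F y))) + (L * norm (z - y))\<^sup>2 / 2"
    by (simp add: power2_eq_square algebra_simps)
  note majorant = majorant_step_residual[OF U a_lt_1 theta_nonneg theta_le v0 r' d0 len this]
  show "2 * L * norm (G (F z)) \<le> (a - (U + L * norm (z - y)))\<^sup>2"
    using majorant(1) by (simp add: mult.assoc)
  show "norm (G (F z)) \<le> (1 + \<theta>\<^sup>2) / 2 * norm (G (F y))"
    using majorant(2) L_pos by (simp add: mult.left_commute)
qed

lemma iterates_invariant:
  assumes start: "x 0 = x0"
    and steps: "\<And>k. k < n \<Longrightarrow> norm (G (F (x k) + F' (x k) (x (Suc k) - x k))) \<le> \<theta> * norm (G (F (x k)))"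
  shows "L * path_length x n < a \<and> 2 * L * norm (G (F (x n))) \<le> (a - L * path_length x n)\<^sup>2
    \<and> norm (G (F (x n))) \<le> ((1 + \<theta>\<^sup>2) / 2) ^ n * b"
  using steps
proof (induction n)
  case 0
  show ?case using a_pos a_sq residual_x0 L_pos start by (simp add: mult.commute mult.left_commute)
next
  case (Suc n)
  then have IH: "L * path_length x n < a" "2 * L * norm (G (F (x n))) \<le> (a - L * path_length x n)\<^sup>2"
    "norm (G (F (x n))) \<le> ((1 + \<theta>\<^sup>2) / 2) ^ n * b" by auto
  have "L * norm (x n - x0) \<le> L * path_length x n"
    using norm_diff_le_path_length[of x n] start L_pos by simp
  moreover have "0 \<le> L * path_length x n"
    by (intro mult_nonneg_nonneg less_imp_le[OF L_pos] path_length_nonneg)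
  ultimately have step: "L * path_length x n + L * norm (x (Suc n) - x n) < a"
    "2 * L * norm (G (F (x (Suc n)))) \<le> (a - (L * path_length x n + L * norm (x (Suc n) - x n)))\<^sup>2"
    "norm (G (F (x (Suc n)))) \<le> (1 + \<theta>\<^sup>2) / 2 * norm (G (F (x n)))"
    using inexact_step_invariant[OF _ _ IH(1,2) Suc.prems[OF lessI]] by blast+
  note step(3)
  also have "\<dots> \<le> (1 + \<theta>\<^sup>2) / 2 * (((1 + \<theta>\<^sup>2) / 2) ^ n * b)"
    by (rule mult_left_mono[OF IH(3)]) simp
  also have "\<dots> = ((1 + \<theta>\<^sup>2) / 2) ^ Suc n * b" by simp
  finally show ?case
    unfolding path_length_Suc distrib_left using step(1,2) by blast
qed

lemma inexact_newton_step_exists: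
  assumes "x 0 = x0"
    and "\<And>k. k < n \<Longrightarrow> norm (G (F (x k) + F' (x k) (x (Suc k) - x k))) \<le> \<theta> * norm (G (F (x k)))"
  shows "\<exists>S. norm (G (F (x n) + F' (x n) S)) \<le> \<theta> * norm (G (F (x n)))"
proof -
  have "x n \<in> ball x0 (a / L)" using iterates_invariant[OF assms] assms(1) by (intro iterate_mem_ball) auto
  then have "x n \<in> ball x0 (1/L)" using cball_scaled_subset_ball[OF a_lt_1] ball_subset_cball by blast
  then obtain S where "G (F' (x n) S) = - G (F (x n))" using G_F'_surj by blast
  then have "G (F (x n) + F' (x n) S) = 0" by (simp only: blinfun.add_right) simp
  then show ?thesis using theta_nonneg by (intro exI[of _ S]) simp
qed

end

locale inexact_newton_sequence = inexact_newton_kantorovich +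
  fixes x :: "nat \<Rightarrow> 'a::banach"
  assumes start: "x 0 = x0"
    and inexact_step: "\<And>k. norm (G (F (x k) + F' (x k) (x (Suc k) - x k))) \<le> \<theta> * norm (G (F (x k)))"
begin

lemma scaled_path_length_lt: "L * path_length x n < a"
  using iterates_invariant[OF start inexact_step] by auto

lemma residual_le_geometric: "norm (G (F (x n))) \<le> ((1 + \<theta>\<^sup>2) / 2) ^ n * b"
  using iterates_invariant[OF start inexact_step] by auto

lemma iterate_in_ball: "x n \<in> ball x0 (a / L)"
  using iterate_mem_ball[OF start scaled_path_length_lt] .

definition x_star :: 'a where "x_star = lim x"

lemma LIMSEQ_x_star: "x \<longlonglongrightarrow> x_star"
proof -
  have "path_length x n \<le> a / L" for n
    using scaled_path_length_lt[of n] L_pos by (simp add: field_simps)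
  then show ?thesis unfolding x_star_def
    using convergent_if_path_length_bounded convergent_LIMSEQ_iff by blast
qed

lemma scaled_error_le: "L * norm (x_star - x k) \<le> a - L * path_length x k"
proof (rule Lim_bounded)
  show "(\<lambda>n. L * norm (x n - x k)) \<longlonglongrightarrow> L * norm (x_star - x k)"
    by (intro tendsto_intros LIMSEQ_x_star)
  show "\<forall>n\<ge>k. L * norm (x n - x k) \<le> a - L * path_length x k"
  proof (intro allI impI)
    fix n assume "k \<le> n"
    from mult_left_mono[OF norm_diff_le_path_length_diff[OF this, of x] less_imp_le[OF L_pos]]
    show "L * norm (x n - x k) \<le> a - L * path_length x k"
      using scaled_path_length_lt[of n] by (simp add: right_diff_distrib)
  qed
qed

lemma x_star_in_cball: "x_star \<in> cball x0 (a / L)"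
  using scaled_error_le[of 0] start unfolding mem_cball_scaled_iff by simp

lemma x_star_in_ball: "x_star \<in> ball x0 (1/L)"
  using x_star_in_cball cball_scaled_subset_ball[OF a_lt_1] by blast

lemma F_x_star: "F x_star = 0"
proof -
  have "isCont (\<lambda>z. G (F z)) x_star"
    using has_derivative_continuous[OF has_derivative_G_F[OF x_star_in_ball]] by (simp add: continuous_at)
  then have "(\<lambda>n. G (F (x n))) \<longlonglongrightarrow> G (F x_star)" using LIMSEQ_x_star isCont_tendsto_compose by blast
  moreover have "(\<lambda>n. G (F (x n))) \<longlonglongrightarrow> 0"
  proof (rule Lim_null_comparison[OF always_eventually])
    show "\<forall>n. norm (G (F (x n))) \<le> ((1 + \<theta>\<^sup>2) / 2) ^ n * b" using residual_le_geometric by blast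
    have "\<theta>\<^sup>2 < 1" using theta_nonneg theta_lt_1 by (simp add: power_less_one_iff)
    then show "(\<lambda>n. ((1 + \<theta>\<^sup>2) / 2) ^ n * b) \<longlonglongrightarrow> 0"
      by (intro tendsto_mult_left_zero LIMSEQ_power_zero) simp
  qed
  ultimately show ?thesis using LIMSEQ_unique by fastforce
qed

lemma error_estimates:
  shows "norm (x_star - x (Suc k)) \<le>
      ((1 + \<theta>) / 2 * (L / (1 - a)) * norm (x_star - x k) + \<theta> * (1 + a) / (1 - a)) * norm (x_star - x k)"
    and "norm (x_star - x (Suc k)) \<le> ((1 + \<theta>) / 2 + 2 * \<theta> / (1 - a)) * norm (x_star - x k)"
proof -
  have xk: "x k \<in> ball x0 (1/L)"
    using iterate_in_ball cball_scaled_subset_ball[OF a_lt_1] ball_subset_cball by blast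
  have key: "(1 - L * norm (x k - x0)) * norm (x_star - x (Suc k))
      \<le> L / 2 * (norm (x_star - x k))\<^sup>2 + \<theta> * norm (G (F (x k)))"
    by (rule inexact_step_error_le[OF xk x_star_in_ball F_x_star inexact_step])
  have residual: "norm (G (F (x k))) \<le> (1 + a) * norm (x_star - x k)"
    using residual_le_error[OF a_lt_1 _ x_star_in_cball F_x_star] iterate_in_ball ball_subset_cball
    by blast
  have u: "0 \<le> L * norm (x k - x0)" "L * norm (x k - x0) \<le> L * path_length x k"
    using norm_diff_le_path_length[of x k] start L_pos by simp_all
  show "norm (x_star - x (Suc k)) \<le>
      ((1 + \<theta>) / 2 * (L / (1 - a)) * norm (x_star - x k) + \<theta> * (1 + a) / (1 - a)) * norm (x_star - x k)"
    and "norm (x_star - x (Suc k)) \<le> ((1 + \<theta>) / 2 + 2 * \<theta> / (1 - a)) * norm (x_star - x k)"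
    using error_recursion_bounds[OF L_pos scaled_path_length_lt a_lt_1 u norm_ge_zero scaled_error_le theta_nonneg
        residual norm_ge_zero key] by simp_all
qed

end

context inexact_newton_kantorovich
begin

lemma inexact_newton_converges:
  assumes "x 0 = x0"
    and "\<And>k. norm (G (F (x k) + F' (x k) (x (Suc k) - x k))) \<le> \<theta> * norm (G (F (x k)))"
  shows "(\<forall>k. norm (G (F (x k))) \<le> ((1 + \<theta>\<^sup>2) / 2) ^ k * b)
    \<and> (\<forall>k. x k \<in> ball x0 (a / L))
    \<and> (\<exists>xs. x \<longlonglongrightarrow> xs \<and> xs \<in> cball x0 ((1 - sqrt (1 - 2 * L * b)) / L) \<and> F xs = 0
         \<and> (\<forall>y\<in>ball x0 (1/L). F y = 0 \<longrightarrow> y = xs)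
         \<and> (\<forall>k. norm (xs - x (Suc k)) \<le>
               ((1 + \<theta>) / 2 * (L / (1 - a)) * norm (xs - x k) + \<theta> * (1 + a) / (1 - a)) * norm (xs - x k))
         \<and> (\<theta> < (1 - a) / (5 - a) \<longrightarrow>
              (\<forall>k. norm (xs - x (Suc k)) \<le> ((1 + \<theta>) / 2 + 2 * \<theta> / (1 - a)) * norm (xs - x k))))"
proof -
  interpret inexact_newton_sequence F F' G x0 L a b \<theta> x
    using assms by unfold_locales
  have "x_star \<in> cball x0 ((1 - sqrt (1 - 2 * L * b)) / L)"
    using zero_dist_le[OF x_star_in_ball F_x_star] unfolding mem_cball_scaled_iff .
  then show ?thesis
    using residual_le_geometric iterate_in_ball LIMSEQ_x_star F_x_star zero_unique[OF _ _ x_star_in_ball F_x_star]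
      error_estimates
    by blast
qed

end

theorem theorem6p3:
  fixes F :: "'a::banach \<Rightarrow> 'b::banach"
    and F' :: "'a \<Rightarrow> ('a \<Rightarrow>\<^sub>L 'b)"
    and C :: "'a set" and x0 :: 'a and L b \<theta> :: real
  defines "Ginv \<equiv> blinfun_inv (F' x0)"
  defines "lam \<equiv> sqrt (2 * b * L) / L"
  defines "tstar \<equiv> (1 - sqrt (1 - 2 * L * b)) / L"
  assumes contF: "continuous_on C F"
    and derF: "\<And>x. x \<in> interior C \<Longrightarrow> (F has_derivative blinfun_apply (F' x)) (at x)"
    and contF': "continuous_on (interior C) F'"
    and x0: "x0 \<in> interior C"
    and nonsing: "nonsingular (F' x0)"
    and L: "L > 0" and b: "b > 0" and bL: "b * L < 1/2"
    and ballC: "ball x0 (1/L) \<subseteq> C"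
    and lip: "\<And>x y. x \<in> ball x0 (1/L) \<Longrightarrow> y \<in> ball x0 (1/L) \<Longrightarrow>
               norm (Ginv o\<^sub>L (F' y - F' x)) \<le> L * norm (x - y)"
    and Fx0: "norm (Ginv (F x0)) \<le> b"
    and th0: "0 \<le> \<theta>"
    and th1: "\<theta> \<le> (1 - sqrt (2 * b * L)) / (1 + sqrt (2 * b * L))"
  shows
    "(\<forall>n (x :: nat \<Rightarrow> 'a). x 0 = x0 \<longrightarrow>
        (\<forall>k<n. norm (Ginv (F (x k) + F' (x k) (x (Suc k) - x k))) \<le> \<theta> * norm (Ginv (F (x k)))) \<longrightarrow>
        (\<exists>S. norm (Ginv (F (x n) + F' (x n) S)) \<le> \<theta> * norm (Ginv (F (x n)))))
   \<and> (\<forall>x :: nat \<Rightarrow> 'a. x 0 = x0 \<longrightarrow>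
        (\<forall>k. norm (Ginv (F (x k) + F' (x k) (x (Suc k) - x k))) \<le> \<theta> * norm (Ginv (F (x k)))) \<longrightarrow>
        (\<forall>k. norm (Ginv (F (x k))) \<le> ((1 + \<theta>\<^sup>2) / 2) ^ k * b)
      \<and> (\<forall>k. x k \<in> ball x0 lam)
      \<and> (\<exists>xs. x \<longlonglongrightarrow> xs \<and> xs \<in> cball x0 tstar \<and> F xs = 0
           \<and> (\<forall>y\<in>ball x0 (1/L). F y = 0 \<longrightarrow> y = xs)
           \<and> (\<forall>k. norm (xs - x (Suc k)) \<le>
                 ((1 + \<theta>) / 2 * (L / (1 - sqrt (2 * b * L))) * norm (xs - x k)
                  + \<theta> * (1 + sqrt (2 * b * L)) / (1 - sqrt (2 * b * L))) * norm (xs - x k))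
           \<and> (\<theta> < (1 - sqrt (2 * b * L)) / (5 - sqrt (2 * b * L)) \<longrightarrow>
              (\<forall>k. norm (xs - x (Suc k)) \<le>
                 ((1 + \<theta>) / 2 + 2 * \<theta> / (1 - sqrt (2 * b * L))) * norm (xs - x k)))))"
proof -
  let ?a = "sqrt (2 * b * L)"
  have inverse: "Ginv o\<^sub>L F' x0 = id_blinfun \<and> F' x0 o\<^sub>L Ginv = id_blinfun"
    using nonsing unfolding Ginv_def blinfun_inv_def nonsingular_def by (rule someI_ex)
  have ball_interior: "ball x0 (1/L) \<subseteq> interior C" by (rule interior_maximal[OF ballC open_ball])
  have a_lt_1: "?a < 1" using bL by (simp add: real_sqrt_lt_1_iff)
  have "0 < 1 + ?a" using b L by (simp add: add_pos_nonneg)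
  then have "\<theta> * (1 + ?a) \<le> 1 - ?a" using th1 by (simp add: pos_le_divide_eq)
  then have theta_le: "(1 + \<theta>) * ?a \<le> 1 - \<theta>" by (simp add: algebra_simps)
  interpret inexact_newton_kantorovich F F' Ginv x0 L ?a b \<theta>
    using L b derF ball_interior lip inverse a_lt_1 th0 theta_le Fx0 by unfold_locales auto
  show ?thesis
    unfolding lam_def tstar_def using inexact_newton_step_exists inexact_newton_converges by blast
qed

end
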